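(* Let $B$ be a finite skew brace and $X$ a sub-q-cycle set of $B$. Then the subgroup of $(B,+)$ generated by $X$ equals the subgroup of $(B,\circ)$ generated by $X$.
   Context: A skew brace is a triple $(B,+,\circ)$ where $(B,+)$ and $(B,\circ)$ are groups and $a\circ(b+c)=a\circ b-a+a\circ c$; $-a$, $a^-$ are additive and multiplicative inverses, $\lambda_a(b):=-a+a\circ b$, $\delta_a(b):=a\circ b-a$. $B$ is a q-cycle set via $a\cdot b:=\lambda_{a^-}(b)$, $a:b:=\delta_{a^-}(b)$. A q-cycle set is a non-empty set with operations $\cdot,:$ such that each $y\mapsto x\cdot y$ is bijective and $(x\cdot y)\cdot(x\cdot z)=(y:x)\cdot(y\cdot z)$, $(x:y):(x:z)=(y\cdot x):(y:z)$, $(x\cdot y):(x\cdot z)=(y:x)\cdot(y:z)$; a sub-q-cycle set is a subset that is a q-cycle set under the restricted operations. *)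

theory Defs
  imports "HOL-Algebra.Algebra"
begin

(* A skew brace on a common carrier: A is the additive group (B,+), written
  multiplicatively in HOL-Algebra (so a + b is a \<otimes>\<^bsub>A\<^esub> b, -a is inv\<^bsub>A\<^esub> a),
  and M is the multiplicative group (B,\<circ>). *)
definition skew_brace :: "'a monoid \<Rightarrow> 'a monoid \<Rightarrow> bool" where
  "skew_brace A M \<longleftrightarrow> group A \<and> group M \<and> carrier A = carrier M \<and>
     (\<forall>a\<in>carrier M. \<forall>b\<in>carrier M. \<forall>c\<in>carrier M.
        a \<otimes>\<^bsub>M\<^esub> (b \<otimes>\<^bsub>A\<^esub> c)
          = ((a \<otimes>\<^bsub>M\<^esub> b) \<otimes>\<^bsub>A\<^esub> inv\<^bsub>A\<^esub> a) \<otimes>\<^bsub>A\<^esub> (a \<otimes>\<^bsub>M\<^esub> c))"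

definition brace_lambda :: "'a monoid \<Rightarrow> 'a monoid \<Rightarrow> 'a \<Rightarrow> 'a \<Rightarrow> 'a" where
  "brace_lambda A M a b = inv\<^bsub>A\<^esub> a \<otimes>\<^bsub>A\<^esub> (a \<otimes>\<^bsub>M\<^esub> b)"

definition brace_delta :: "'a monoid \<Rightarrow> 'a monoid \<Rightarrow> 'a \<Rightarrow> 'a \<Rightarrow> 'a" where
  "brace_delta A M a b = (a \<otimes>\<^bsub>M\<^esub> b) \<otimes>\<^bsub>A\<^esub> inv\<^bsub>A\<^esub> a"

definition qdot :: "'a monoid \<Rightarrow> 'a monoid \<Rightarrow> 'a \<Rightarrow> 'a \<Rightarrow> 'a" where
  "qdot A M a b = brace_lambda A M (inv\<^bsub>M\<^esub> a) b"

definition qcolon :: "'a monoid \<Rightarrow> 'a monoid \<Rightarrow> 'a \<Rightarrow> 'a \<Rightarrow> 'a" where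
  "qcolon A M a b = brace_delta A M (inv\<^bsub>M\<^esub> a) b"

definition q_cycle_set :: "'a set \<Rightarrow> ('a \<Rightarrow> 'a \<Rightarrow> 'a) \<Rightarrow> ('a \<Rightarrow> 'a \<Rightarrow> 'a) \<Rightarrow> bool" where
  "q_cycle_set Y op1 op2 \<longleftrightarrow> (\<exists>x. x \<in> Y) \<and>
     (\<forall>x\<in>Y. \<forall>y\<in>Y. op1 x y \<in> Y \<and> op2 x y \<in> Y) \<and>
     (\<forall>x\<in>Y. bij_betw (op1 x) Y Y) \<and>
     (\<forall>x\<in>Y. \<forall>y\<in>Y. \<forall>z\<in>Y.
        op1 (op1 x y) (op1 x z) = op1 (op2 y x) (op1 y z) \<and>
        op2 (op2 x y) (op2 x z) = op2 (op1 y x) (op2 y z) \<and>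
        op2 (op1 x y) (op1 x z) = op1 (op2 y x) (op2 y z))"

definition sub_q_cycle_set :: "'a monoid \<Rightarrow> 'a monoid \<Rightarrow> 'a set \<Rightarrow> bool" where
  "sub_q_cycle_set A M Y \<longleftrightarrow> Y \<subseteq> carrier M \<and> q_cycle_set Y (qdot A M) (qcolon A M)"

end

theory Submission
  imports Defs
begin

(* Since a o b = a + lambda_a(b), each lambda_a is an endomorphism of (B,+) and
  lambda_(a o b) = lambda_a lambda_b, the g in <Y>_+ with lambda_g(Y) <= Y form a submonoid of
  (B,o) containing Y.  In a finite group every submonoid is a subgroup, so this set contains <Y>_o.
  Conversely, a + y = a o lambda_(a^-)(y) shows that the h with <Y>_o + h <= <Y>_o form a
  submonoid of (B,+) containing Y, and finiteness again gives <Y>_+ <= <Y>_o. *)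

lemma (in group) finite_submonoid_is_subgroup:
  assumes "finite (carrier G)" and H: "submonoid H G"
  shows "subgroup H G"
proof (rule submonoid_subgroupI[OF H])
  fix a assume a: "a \<in> H"
  then have a_carrier: "a \<in> carrier G"
    by (rule submonoid.mem_carrier[OF H])
  have pow_closed: "a [^] n \<in> H" for n :: nat
    by (induction n) (simp_all add: a submonoid.one_closed[OF H] submonoid.m_closed[OF H])
  obtain n where "order G = Suc n"
    using assms(1) order_gt_0_iff_finite gr0_implies_Suc by blast
  then have "a [^] n \<otimes> a = \<one>"
    using pow_order_eq_1[OF a_carrier] by simp
  then have "inv a = a [^] n"
    using inv_equality a_carrier by simp
  then show "inv a \<in> H"
    using pow_closed by simp
qed

locale skew_brace_groups = A: group A + M: group M for A M :: "'a monoid" +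
  assumes carrier_eq [simp]: "carrier A = carrier M"
    and brace_distrib: "\<lbrakk>a \<in> carrier M; b \<in> carrier M; c \<in> carrier M\<rbrakk> \<Longrightarrow>
      a \<otimes>\<^bsub>M\<^esub> (b \<otimes>\<^bsub>A\<^esub> c) = ((a \<otimes>\<^bsub>M\<^esub> b) \<otimes>\<^bsub>A\<^esub> inv\<^bsub>A\<^esub> a) \<otimes>\<^bsub>A\<^esub> (a \<otimes>\<^bsub>M\<^esub> c)"

lemma skew_brace_groupsI: "skew_brace A M \<Longrightarrow> skew_brace_groups A M"
  unfolding skew_brace_def skew_brace_groups_def skew_brace_groups_axioms_def by blast

context skew_brace_groups
begin

abbreviation lam :: "'a \<Rightarrow> 'a \<Rightarrow> 'a" where
  "lam \<equiv> brace_lambda A M"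

lemma A_closed [simp]:
  "\<one>\<^bsub>A\<^esub> \<in> carrier M"
  "x \<in> carrier M \<Longrightarrow> inv\<^bsub>A\<^esub> x \<in> carrier M"
  "\<lbrakk>x \<in> carrier M; y \<in> carrier M\<rbrakk> \<Longrightarrow> x \<otimes>\<^bsub>A\<^esub> y \<in> carrier M"
  using A.one_closed A.inv_closed A.m_closed by simp_all

lemma one_eq: "\<one>\<^bsub>A\<^esub> = \<one>\<^bsub>M\<^esub>"
proof -
  have "\<one>\<^bsub>A\<^esub> = (\<one>\<^bsub>A\<^esub> \<otimes>\<^bsub>A\<^esub> inv\<^bsub>A\<^esub> \<one>\<^bsub>M\<^esub>) \<otimes>\<^bsub>A\<^esub> \<one>\<^bsub>A\<^esub>"
    using brace_distrib[of "\<one>\<^bsub>M\<^esub>" "\<one>\<^bsub>A\<^esub>" "\<one>\<^bsub>A\<^esub>"] A.one_closed by simp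
  then have "inv\<^bsub>A\<^esub> \<one>\<^bsub>M\<^esub> = \<one>\<^bsub>A\<^esub>"
    by simp
  then show ?thesis
    by (metis A.inv_inv A.inv_one M.one_closed carrier_eq)
qed

lemma lam_closed [simp]: "\<lbrakk>a \<in> carrier M; b \<in> carrier M\<rbrakk> \<Longrightarrow> lam a b \<in> carrier M"
  unfolding brace_lambda_def by (metis A.inv_closed A.m_closed M.m_closed carrier_eq)

lemma mult_eq_add_lam: "\<lbrakk>a \<in> carrier M; b \<in> carrier M\<rbrakk> \<Longrightarrow> a \<otimes>\<^bsub>M\<^esub> b = a \<otimes>\<^bsub>A\<^esub> lam a b"
  unfolding brace_lambda_def by (simp add: A.m_assoc[symmetric])

lemma lam_add:
  "\<lbrakk>a \<in> carrier M; b \<in> carrier M; c \<in> carrier M\<rbrakk> \<Longrightarrow>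
    lam a (b \<otimes>\<^bsub>A\<^esub> c) = lam a b \<otimes>\<^bsub>A\<^esub> lam a c"
  unfolding brace_lambda_def by (simp add: brace_distrib A.m_assoc)

lemma lam_mult:
  assumes "a \<in> carrier M" "b \<in> carrier M" "c \<in> carrier M"
  shows "lam (a \<otimes>\<^bsub>M\<^esub> b) c = lam a (lam b c)"
proof -
  have "(a \<otimes>\<^bsub>M\<^esub> b) \<otimes>\<^bsub>M\<^esub> c = (a \<otimes>\<^bsub>M\<^esub> b) \<otimes>\<^bsub>A\<^esub> (inv\<^bsub>A\<^esub> a \<otimes>\<^bsub>A\<^esub> (a \<otimes>\<^bsub>M\<^esub> lam b c))"
    using assms by (simp add: M.m_assoc mult_eq_add_lam[of b c] brace_distrib A.m_assoc)
  then show ?thesis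
    using assms unfolding brace_lambda_def[of A M "a \<otimes>\<^bsub>M\<^esub> b"]
    by (simp add: brace_lambda_def[of A M a] A.m_assoc[symmetric])
qed

lemma lam_one [simp]: "c \<in> carrier M \<Longrightarrow> lam \<one>\<^bsub>M\<^esub> c = c"
  unfolding brace_lambda_def by (simp flip: one_eq)

lemma lam_group_hom: "a \<in> carrier M \<Longrightarrow> group_hom A A (lam a)"
  by (intro group_hom.intro group_hom_axioms.intro A.is_group homI) (simp_all add: lam_add)

lemma add_eq_mult_lam_inv:
  assumes "a \<in> carrier M" "b \<in> carrier M"
  shows "a \<otimes>\<^bsub>A\<^esub> b = a \<otimes>\<^bsub>M\<^esub> lam (inv\<^bsub>M\<^esub> a) b"
proof -
  have "lam a (lam (inv\<^bsub>M\<^esub> a) b) = b"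
    using assms by (simp add: lam_mult[symmetric])
  then show ?thesis
    using assms by (simp add: mult_eq_add_lam)
qed

lemma sub_q_cycle_set_lam_image:
  assumes "sub_q_cycle_set A M Y" and x: "x \<in> Y"
  shows "lam x ` Y = Y"
proof -
  have Y: "Y \<subseteq> carrier M" and "bij_betw (lam (inv\<^bsub>M\<^esub> x)) Y Y"
    using assms unfolding sub_q_cycle_set_def q_cycle_set_def qdot_def[abs_def] by auto
  then have "lam (inv\<^bsub>M\<^esub> x) ` Y = Y"
    by (simp add: bij_betw_imp_surj_on)
  then have "lam x ` Y = (\<lambda>c. lam x (lam (inv\<^bsub>M\<^esub> x) c)) ` Y"
    by (metis image_image)
  also have "\<dots> = Y"
    using Y x by (auto simp: lam_mult[symmetric] subset_iff)
  finally show ?thesis .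
qed

lemma lam_image_generate:
  assumes "Y \<subseteq> carrier M" "a \<in> carrier M" "lam a ` Y \<subseteq> Y"
  shows "lam a ` generate A Y \<subseteq> generate A Y"
proof -
  have "lam a ` generate A Y = generate A (lam a ` Y)"
    using group_hom.generate_img[OF lam_group_hom] assms by simp
  then show ?thesis
    using A.mono_generate assms(3) by simp
qed

lemma generate_M_subset_generate_A:
  assumes fin: "finite (carrier M)" and Y: "Y \<subseteq> carrier M"
    and invariant: "\<And>x. x \<in> Y \<Longrightarrow> lam x ` Y \<subseteq> Y"
  shows "generate M Y \<subseteq> {g \<in> generate A Y. lam g ` Y \<subseteq> Y}" (is "_ \<subseteq> ?S")
proof (rule M.generate_subgroup_incl)
  show "Y \<subseteq> ?S"
    using invariant by (auto intro: generate.incl)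
  have S_carrier: "?S \<subseteq> carrier M"
    using A.generate_incl Y by auto
  have "submonoid ?S M"
  proof
    show "?S \<subseteq> carrier M"
      by (fact S_carrier)
    show "\<one>\<^bsub>M\<^esub> \<in> ?S"
      using generate.one[of A Y] Y by (auto simp: one_eq)
    fix a b assume a: "a \<in> ?S" and b: "b \<in> ?S"
    then have carrier: "a \<in> carrier M" "b \<in> carrier M"
      using S_carrier by auto
    have "lam a b \<in> lam a ` generate A Y"
      using b by simp
    then have "lam a b \<in> generate A Y"
      using lam_image_generate[OF Y carrier(1)] a by auto
    then have "a \<otimes>\<^bsub>M\<^esub> b \<in> generate A Y"
      using a carrier by (simp add: mult_eq_add_lam generate.eng)
    moreover have "lam (a \<otimes>\<^bsub>M\<^esub> b) y \<in> Y" if y: "y \<in> Y" for y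
    proof -
      have "lam a (lam b y) \<in> Y"
        using a b y by blast
      then show ?thesis
        using carrier y Y lam_mult by auto
    qed
    ultimately show "a \<otimes>\<^bsub>M\<^esub> b \<in> ?S"
      by auto
  qed
  then show "subgroup ?S M"
    by (rule M.finite_submonoid_is_subgroup[OF fin])
qed

lemma generate_A_subset_generate_M:
  assumes fin: "finite (carrier M)" and Y: "Y \<subseteq> carrier M"
    and invariant: "\<And>x. x \<in> Y \<Longrightarrow> lam x ` Y \<subseteq> Y"
  shows "generate A Y \<subseteq> generate M Y"
proof -
  let ?T = "{h \<in> carrier M. \<forall>g \<in> generate M Y. g \<otimes>\<^bsub>A\<^esub> h \<in> generate M Y}"
  have M_carrier: "generate M Y \<subseteq> carrier M"
    using M.generate_incl Y .
  have "submonoid ?T A"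
  proof
    show "?T \<subseteq> carrier A"
      by auto
    show "\<one>\<^bsub>A\<^esub> \<in> ?T"
      using M_carrier by auto
    show "h \<otimes>\<^bsub>A\<^esub> k \<in> ?T" if "h \<in> ?T" "k \<in> ?T" for h k
      using that M_carrier by (auto simp: A.m_assoc[symmetric])
  qed
  then have "subgroup ?T A"
    using A.finite_submonoid_is_subgroup fin by simp
  moreover have "Y \<subseteq> ?T"
  proof (intro subsetI CollectI conjI ballI)
    fix y assume y: "y \<in> Y"
    then show "y \<in> carrier M"
      using Y by auto
    fix g assume g: "g \<in> generate M Y"
    have "inv\<^bsub>M\<^esub> g \<in> generate M Y"
      using M.generate_m_inv_closed[OF Y g] .
    then have "lam (inv\<^bsub>M\<^esub> g) ` Y \<subseteq> Y"
      using generate_M_subset_generate_A[OF fin Y invariant] by auto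
    then have "lam (inv\<^bsub>M\<^esub> g) y \<in> generate M Y"
      using y by (auto intro: generate.incl)
    then have "g \<otimes>\<^bsub>M\<^esub> lam (inv\<^bsub>M\<^esub> g) y \<in> generate M Y"
      by (rule generate.eng[OF g])
    moreover have "g \<otimes>\<^bsub>A\<^esub> y = g \<otimes>\<^bsub>M\<^esub> lam (inv\<^bsub>M\<^esub> g) y"
      using g y M_carrier Y by (intro add_eq_mult_lam_inv) auto
    ultimately show "g \<otimes>\<^bsub>A\<^esub> y \<in> generate M Y"
      by simp
  qed
  ultimately have "generate A Y \<subseteq> ?T"
    by (rule A.generate_subgroup_incl[rotated])
  then show ?thesis
    using generate.one[of M Y] by (force simp flip: one_eq)
qed

end

theorem mainTheorem18:
  fixes A M :: "'a monoid" and Y :: "'a set"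
  assumes "skew_brace A M"
    and "finite (carrier M)"
    and "sub_q_cycle_set A M Y"
  shows "generate A Y = generate M Y"
proof -
  interpret skew_brace_groups A M
    using assms(1) by (rule skew_brace_groupsI)
  have Y: "Y \<subseteq> carrier M"
    using assms(3) unfolding sub_q_cycle_set_def by simp
  have invariant: "\<And>x. x \<in> Y \<Longrightarrow> lam x ` Y \<subseteq> Y"
    using sub_q_cycle_set_lam_image[OF assms(3)] by simp
  show ?thesis
  proof
    show "generate A Y \<subseteq> generate M Y"
      using generate_A_subset_generate_M[OF assms(2) Y invariant] .
    show "generate M Y \<subseteq> generate A Y"
      using generate_M_subset_generate_A[OF assms(2) Y invariant] by auto
  qed
qed

end
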